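(* Let $p$ be an odd prime and let $\alpha_1,\alpha_2,\beta_2,\beta_3,\gamma_1,\gamma_3\in p\mathbb{Z}_p$ be such that the free $\mathbb{Z}_p$-module $L_A$ with basis $x_1,x_2,x_3$ and alternating bilinear bracket $[x_1,x_2]=\alpha_1x_1+\alpha_2x_2$, $[x_2,x_3]=\beta_2x_2+\beta_3x_3$, $[x_3,x_1]=\gamma_1x_1+\gamma_3x_3$ is a $\mathbb{Z}_p$-Lie algebra. Then there exist $\eta,\rho,\mu,\lambda\in p\mathbb{Z}_p$ with $\eta\rho-\mu\lambda=0$ such that $L_A$ is isomorphic to one of the following $\mathbb{Z}_p$-Lie algebras, each free of rank $3$ on $x,y,z$ with the indicated brackets: (1) $L_1(\eta,\rho,\mu,\lambda)$: $[x,y]=\eta y$, $[y,z]=\mu y$, $[z,x]=\lambda z+\rho x$; (2) $L_2(\eta,\mu)$: $[x,y]=0$, $[y,z]=\eta y+\mu z$, $[z,x]=0$; (3) $L_3(\eta,\mu)$: $[x,y]=0$, $[y,z]=\eta z$, $[z,x]=\mu z$; (4) for $\eta\mu\lambda\ne0$, $L_4(\eta,\mu,\lambda)$: $[x,y]=\eta x+\mu y$, $[y,z]=\lambda y-\eta z$, $[z,x]=-\lambda x-\mu z$; (5) for $\eta\mu\lambda\ne0$, $L_\ast(\eta,\mu,\lambda)$: $[x,y]=\eta x+\mu y$, $[y,z]=\lambda y+\eta z$, $[z,x]=\lambda x+\mu z$. *)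

theory Defs
  imports "HOL-Algebra.Ring" "HOL-Computational_Algebra.Primes"
begin

text \<open>The ring of p-adic integers, modelled as the inverse limit of the rings Z/p^n Z:
  a p-adic integer is a compatible sequence of canonical residues a n in {0..<p^n}.\<close>

definition Zp :: "nat \<Rightarrow> (nat \<Rightarrow> int) ring" where
  "Zp p = \<lparr> partial_object.carrier = {a. \<forall>n. a n \<in> {0..<int p ^ n} \<and> a (Suc n) mod (int p ^ n) = a n},
            monoid.mult = (\<lambda>a b n. (a n * b n) mod (int p ^ n)),
            monoid.one = (\<lambda>n. 1 mod (int p ^ n)),
            ring.zero = (\<lambda>n. 0),
            ring.add = (\<lambda>a b n. (a n + b n) mod (int p ^ n)) \<rparr>"

definition pZp :: "nat \<Rightarrow> (nat \<Rightarrow> int) set" where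
  "pZp p = {a \<in> carrier (Zp p). a 1 = 0}"

definition V3 :: "('a, 'm) ring_scheme \<Rightarrow> (nat \<Rightarrow> 'a) set" where
  "V3 R = {0..<3} \<rightarrow>\<^sub>E carrier R"

definition vec3 :: "'a \<Rightarrow> 'a \<Rightarrow> 'a \<Rightarrow> nat \<Rightarrow> 'a" where
  "vec3 a b c = (\<lambda>i\<in>{0..<3}. [a, b, c] ! i)"

definition vzero :: "('a, 'm) ring_scheme \<Rightarrow> nat \<Rightarrow> 'a" where
  "vzero R = (\<lambda>i\<in>{0..<3}. \<zero>\<^bsub>R\<^esub>)"

definition vadd :: "('a, 'm) ring_scheme \<Rightarrow> (nat \<Rightarrow> 'a) \<Rightarrow> (nat \<Rightarrow> 'a) \<Rightarrow> nat \<Rightarrow> 'a" where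
  "vadd R v w = (\<lambda>i\<in>{0..<3}. v i \<oplus>\<^bsub>R\<^esub> w i)"

definition vneg :: "('a, 'm) ring_scheme \<Rightarrow> (nat \<Rightarrow> 'a) \<Rightarrow> nat \<Rightarrow> 'a" where
  "vneg R v = (\<lambda>i\<in>{0..<3}. \<ominus>\<^bsub>R\<^esub> v i)"

definition smul :: "('a, 'm) ring_scheme \<Rightarrow> 'a \<Rightarrow> (nat \<Rightarrow> 'a) \<Rightarrow> nat \<Rightarrow> 'a" where
  "smul R a v = (\<lambda>i\<in>{0..<3}. a \<otimes>\<^bsub>R\<^esub> v i)"

definition tab :: "('a, 'm) ring_scheme \<Rightarrow> (nat \<Rightarrow> 'a) \<Rightarrow> (nat \<Rightarrow> 'a) \<Rightarrow> (nat \<Rightarrow> 'a)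
                     \<Rightarrow> nat \<Rightarrow> nat \<Rightarrow> nat \<Rightarrow> 'a" where
  "tab R a b c i j =
     (if (i, j) = (0, 1) then a else if (i, j) = (1, 0) then vneg R a
      else if (i, j) = (1, 2) then b else if (i, j) = (2, 1) then vneg R b
      else if (i, j) = (2, 0) then c else if (i, j) = (0, 2) then vneg R c
      else vzero R)"

text \<open>The bilinear bracket on R^3 determined by a table T (T i j = [e_i, e_j]).\<close>
definition br :: "('a, 'm) ring_scheme \<Rightarrow> (nat \<Rightarrow> nat \<Rightarrow> nat \<Rightarrow> 'a)
                    \<Rightarrow> (nat \<Rightarrow> 'a) \<Rightarrow> (nat \<Rightarrow> 'a) \<Rightarrow> nat \<Rightarrow> 'a" where
  "br R T v w = (\<lambda>k\<in>{0..<3}. \<Oplus>\<^bsub>R\<^esub>i\<in>{0..<3}. \<Oplus>\<^bsub>R\<^esub>j\<in>{0..<3}.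
                    v i \<otimes>\<^bsub>R\<^esub> w j \<otimes>\<^bsub>R\<^esub> T i j k)"

definition is_lie :: "('a, 'm) ring_scheme \<Rightarrow> (nat \<Rightarrow> nat \<Rightarrow> nat \<Rightarrow> 'a) \<Rightarrow> bool" where
  "is_lie R T \<longleftrightarrow>
     (\<forall>v\<in>V3 R. br R T v v = vzero R) \<and>
     (\<forall>u\<in>V3 R. \<forall>v\<in>V3 R. \<forall>w\<in>V3 R.
        vadd R (vadd R (br R T u (br R T v w)) (br R T v (br R T w u))) (br R T w (br R T u v))
        = vzero R)"

definition lie_iso :: "('a, 'm) ring_scheme \<Rightarrow> (nat \<Rightarrow> nat \<Rightarrow> nat \<Rightarrow> 'a)
                         \<Rightarrow> (nat \<Rightarrow> nat \<Rightarrow> nat \<Rightarrow> 'a) \<Rightarrow> bool" where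
  "lie_iso R T1 T2 \<longleftrightarrow> (\<exists>f. bij_betw f (V3 R) (V3 R) \<and>
     (\<forall>v\<in>V3 R. \<forall>w\<in>V3 R. f (vadd R v w) = vadd R (f v) (f w)) \<and>
     (\<forall>a\<in>carrier R. \<forall>v\<in>V3 R. f (smul R a v) = smul R a (f v)) \<and>
     (\<forall>v\<in>V3 R. \<forall>w\<in>V3 R. f (br R T1 v w) = br R T2 (f v) (f w)))"

end

theory Submission
  imports Defs
begin

text \<open>
  The Jacobi identity on the basis is equivalent to the three relations
  \<open>\<alpha>1\<beta>2 = \<beta>3\<gamma>1\<close>, \<open>\<beta>2\<gamma>3 = \<gamma>1\<alpha>2\<close>, \<open>\<alpha>1\<gamma>3 = \<alpha>2\<beta>3\<close>.
  Cyclically relabelling the basis cycles the pairs \<open>(\<alpha>1,\<beta>3)\<close>, \<open>(\<beta>2,\<gamma>1)\<close>, \<open>(\<alpha>2,\<gamma>3)\<close>;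
  if one of them vanishes we may take it to be \<open>(\<alpha>1,\<beta>3)\<close>, and then \<open>L\<^sub>A\<close> already is
  \<open>L\<^sub>1(\<alpha>2,\<gamma>1,\<beta>2,\<gamma>3)\<close>. Otherwise, since \<open>\<int>\<^sub>p\<close> is an integral domain, the relations force
  \<open>\<beta>2\<gamma>3 \<noteq> 0\<close> and \<open>(\<alpha>1\<^sup>2 - \<beta>3\<^sup>2) \<beta>2\<gamma>3 = 0\<close>, so \<open>\<beta>3 = \<plusminus>\<alpha>1\<close>, and then
  \<open>\<gamma>1 = \<plusminus>\<beta>2\<close>, \<open>\<gamma>3 = \<plusminus>\<alpha>2\<close> with the same sign: \<open>L\<^sub>A\<close> is literally \<open>L\<^sub>*\<close> or \<open>L\<^sub>4\<close>.
\<close>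

lemma vec3_simps [simp]:
  "vec3 a b c 0 = a" "vec3 a b c (Suc 0) = b" "vec3 a b c 2 = c"
  by (simp_all add: vec3_def numeral_2_eq_2)

lemma V3_vec3 [simp]: "vec3 a b c \<in> V3 R \<longleftrightarrow> a \<in> carrier R \<and> b \<in> carrier R \<and> c \<in> carrier R"
proof -
  have "{0..<3::nat} = {0,1,2}" by auto
  then show ?thesis by (auto simp: V3_def vec3_def PiE_def Pi_def extensional_def)
qed

lemma less_3_cases: "(k::nat) < 3 \<Longrightarrow> k = 0 \<or> k = 1 \<or> k = 2"
  by auto

lemma V3_eqI:
  assumes "v \<in> V3 R" "w \<in> V3 R" "\<And>k. k < 3 \<Longrightarrow> v k = w k"
  shows "v = w"
  using assms by (metis PiE_ext V3_def atLeastLessThan_iff)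

lemma V3_mem: "v \<in> V3 R \<Longrightarrow> k < 3 \<Longrightarrow> v k \<in> carrier R"
  by (auto simp: V3_def)

lemma V3_components:
  "v \<in> V3 R \<Longrightarrow> v 0 \<in> carrier R \<and> v 1 \<in> carrier R \<and> v 2 \<in> carrier R"
  by (simp add: V3_mem)

lemma lie_iso_refl: "lie_iso R T T"
  unfolding lie_iso_def by (rule exI[of _ id]) auto

lemma lie_iso_trans:
  assumes "lie_iso R T1 T2" "lie_iso R T2 T3"
  shows "lie_iso R T1 T3"
proof -
  obtain f where f: "bij_betw f (V3 R) (V3 R)"
     "\<forall>v\<in>V3 R. \<forall>w\<in>V3 R. f (vadd R v w) = vadd R (f v) (f w)"
     "\<forall>a\<in>carrier R. \<forall>v\<in>V3 R. f (smul R a v) = smul R a (f v)"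
     "\<forall>v\<in>V3 R. \<forall>w\<in>V3 R. f (br R T1 v w) = br R T2 (f v) (f w)"
    using assms(1) unfolding lie_iso_def by blast
  obtain g where g: "bij_betw g (V3 R) (V3 R)"
     "\<forall>v\<in>V3 R. \<forall>w\<in>V3 R. g (vadd R v w) = vadd R (g v) (g w)"
     "\<forall>a\<in>carrier R. \<forall>v\<in>V3 R. g (smul R a v) = smul R a (g v)"
     "\<forall>v\<in>V3 R. \<forall>w\<in>V3 R. g (br R T2 v w) = br R T3 (g v) (g w)"
    using assms(2) unfolding lie_iso_def by blast
  have "f v \<in> V3 R" if "v \<in> V3 R" for v
    using f(1) that by (auto simp: bij_betw_def)
  with f g show ?thesis
    unfolding lie_iso_def by (intro exI[of _ "g \<circ> f"]) (auto intro: bij_betw_trans)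
qed

lemma br_apply:
  assumes "k < 3"
  shows "br R T v w k = (\<Oplus>\<^bsub>R\<^esub>i\<in>{0,1,2}. \<Oplus>\<^bsub>R\<^esub>j\<in>{0,1,2}. v i \<otimes>\<^bsub>R\<^esub> w j \<otimes>\<^bsub>R\<^esub> T i j k)"
proof -
  from assms have "k \<in> {0..<3}" by simp
  moreover have "{0..<3::nat} = {0,1,2}" by auto
  ultimately show ?thesis unfolding br_def by simp
qed

context cring begin

lemma br_tab:
  assumes "v \<in> V3 R" "w \<in> V3 R" "a \<in> V3 R" "b \<in> V3 R" "c \<in> V3 R" "k < 3"
  shows "br R (tab R a b c) v w k =
    (v 0 \<otimes> w 1 \<ominus> v 1 \<otimes> w 0) \<otimes> a k \<oplus> (v 1 \<otimes> w 2 \<ominus> v 2 \<otimes> w 1) \<otimes> b k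
      \<oplus> (v 2 \<otimes> w 0 \<ominus> v 0 \<otimes> w 2) \<otimes> c k"
proof -
  have "tab R a b c i j k \<in> carrier R" for i j
    using assms by (auto simp: tab_def vneg_def vzero_def V3_mem)
  with assms V3_components[OF assms(1)] V3_components[OF assms(2)]
    V3_mem[OF assms(3) assms(6)] V3_mem[OF assms(4) assms(6)] V3_mem[OF assms(5) assms(6)]
  show ?thesis
    by (simp add: br_apply finsum_insert Pi_def tab_def vneg_def vzero_def) algebra
qed

lemma br_tab_closed:
  assumes "v \<in> V3 R" "w \<in> V3 R" "a \<in> V3 R" "b \<in> V3 R" "c \<in> V3 R"
  shows "br R (tab R a b c) v w \<in> V3 R"
proof -
  have "br R (tab R a b c) v w k \<in> carrier R" if "k < 3" for k
    using V3_components[OF assms(1)] V3_components[OF assms(2)] V3_mem[OF assms(3) that]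
      V3_mem[OF assms(4) that] V3_mem[OF assms(5) that]
    by (simp add: br_tab[OF assms that])
  then show ?thesis by (auto simp: V3_def br_def)
qed

text \<open>The left-hand side is coordinate \<open>k\<close> of \<open>[e0,[e1,e2]] + [e1,[e2,e0]] + [e2,[e0,e1]]\<close>.\<close>

lemma tab_basis_jacobi:
  assumes lie: "is_lie R (tab R a b c)" and abc: "a \<in> V3 R" "b \<in> V3 R" "c \<in> V3 R" and "k < 3"
  shows "(b 1 \<ominus> c 0) \<otimes> a k \<oplus> (c 2 \<ominus> a 1) \<otimes> b k \<oplus> (a 0 \<ominus> b 2) \<otimes> c k = \<zero>"
proof -
  define e0 e1 e2 where "e0 = vec3 \<one> \<zero> \<zero>" and "e1 = vec3 \<zero> \<one> \<zero>" and "e2 = vec3 \<zero> \<zero> \<one>"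
  have e: "e0 \<in> V3 R" "e1 \<in> V3 R" "e2 \<in> V3 R"
    by (simp_all add: e0_def e1_def e2_def)
  let ?br = "br R (tab R a b c)"
  have "vadd R (vadd R (?br e0 (?br e1 e2)) (?br e1 (?br e2 e0))) (?br e2 (?br e0 e1)) k = vzero R k"
    using lie e unfolding is_lie_def by simp
  then have jacobi: "?br e0 (?br e1 e2) k \<oplus> ?br e1 (?br e2 e0) k \<oplus> ?br e2 (?br e0 e1) k = \<zero>"
    using \<open>k < 3\<close> by (simp add: vadd_def vzero_def)
  have "(b 1 \<ominus> c 0) \<otimes> a k \<oplus> (c 2 \<ominus> a 1) \<otimes> b k \<oplus> (a 0 \<ominus> b 2) \<otimes> c k
      = ?br e0 (?br e1 e2) k \<oplus> ?br e1 (?br e2 e0) k \<oplus> ?br e2 (?br e0 e1) k"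
    using abc V3_components[OF abc(1)] V3_components[OF abc(2)] V3_components[OF abc(3)]
      V3_mem[OF abc(1) \<open>k < 3\<close>] V3_mem[OF abc(2) \<open>k < 3\<close>] V3_mem[OF abc(3) \<open>k < 3\<close>]
    by (simp add: br_tab br_tab_closed e \<open>k < 3\<close>) (simp add: e0_def e1_def e2_def, algebra)
  with jacobi show ?thesis by simp
qed

lemma jacobi_relations:
  assumes lie: "is_lie R (tab R (vec3 \<alpha>1 \<alpha>2 \<zero>) (vec3 \<zero> \<beta>2 \<beta>3) (vec3 \<gamma>1 \<zero> \<gamma>3))"
    and carr: "\<alpha>1 \<in> carrier R" "\<alpha>2 \<in> carrier R" "\<beta>2 \<in> carrier R"
      "\<beta>3 \<in> carrier R" "\<gamma>1 \<in> carrier R" "\<gamma>3 \<in> carrier R"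
  shows "\<alpha>1 \<otimes> \<beta>2 = \<beta>3 \<otimes> \<gamma>1" "\<beta>2 \<otimes> \<gamma>3 = \<gamma>1 \<otimes> \<alpha>2" "\<alpha>1 \<otimes> \<gamma>3 = \<alpha>2 \<otimes> \<beta>3"
proof -
  let ?J = "\<lambda>k. (\<beta>2 \<ominus> \<gamma>1) \<otimes> vec3 \<alpha>1 \<alpha>2 \<zero> k \<oplus> (\<gamma>3 \<ominus> \<alpha>2) \<otimes> vec3 \<zero> \<beta>2 \<beta>3 k
    \<oplus> (\<alpha>1 \<ominus> \<beta>3) \<otimes> vec3 \<gamma>1 \<zero> \<gamma>3 k"
  have J: "?J k = \<zero>" if "k < 3" for k
    using tab_basis_jacobi[OF lie _ _ _ that] carr by simp
  have "\<alpha>1 \<otimes> \<beta>2 = ?J 0 \<oplus> \<beta>3 \<otimes> \<gamma>1" "\<beta>2 \<otimes> \<gamma>3 = ?J 1 \<oplus> \<gamma>1 \<otimes> \<alpha>2"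
    "\<alpha>1 \<otimes> \<gamma>3 = ?J 2 \<oplus> \<alpha>2 \<otimes> \<beta>3"
    using carr by (simp_all, algebra+)
  with J[of 0] J[of 1] J[of 2] carr
  show "\<alpha>1 \<otimes> \<beta>2 = \<beta>3 \<otimes> \<gamma>1" "\<beta>2 \<otimes> \<gamma>3 = \<gamma>1 \<otimes> \<alpha>2" "\<alpha>1 \<otimes> \<gamma>3 = \<alpha>2 \<otimes> \<beta>3"
    by simp_all
qed

end

definition rot :: "(nat \<Rightarrow> 'a) \<Rightarrow> nat \<Rightarrow> 'a" where
  "rot v = vec3 (v 1) (v 2) (v 0)"

lemma rot_vec3 [simp]: "rot (vec3 a b c) = vec3 b c a"
  by (simp add: rot_def)

lemma rot_V3: "v \<in> V3 R \<Longrightarrow> rot v \<in> V3 R"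
  using V3_mem[of v R 0] V3_mem[of v R 1] V3_mem[of v R 2] by (simp add: rot_def)

lemma rot_rot_rot: "v \<in> V3 R \<Longrightarrow> rot (rot (rot v)) = v"
  by (rule V3_eqI[OF rot_V3[OF rot_V3[OF rot_V3]]]) (auto simp: rot_def dest: less_3_cases)

lemma rot_vadd: "rot (vadd R v w) = vadd R (rot v) (rot w)"
  by (rule extensionalityI[where A="{0..<3}"]) (auto simp: rot_def vec3_def vadd_def dest!: less_3_cases)

lemma rot_smul: "rot (smul R x v) = smul R x (rot v)"
  by (rule extensionalityI[where A="{0..<3}"]) (auto simp: rot_def vec3_def smul_def dest!: less_3_cases)

context cring begin

lemma rot_br_tab:
  assumes "a \<in> V3 R" "b \<in> V3 R" "c \<in> V3 R" and v: "v \<in> V3 R" and w: "w \<in> V3 R"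
  shows "rot (br R (tab R a b c) v w) = br R (tab R (rot b) (rot c) (rot a)) (rot v) (rot w)"
proof (rule V3_eqI)
  show "rot (br R (tab R a b c) v w) \<in> V3 R" "br R (tab R (rot b) (rot c) (rot a)) (rot v) (rot w) \<in> V3 R"
    by (simp_all add: assms rot_V3 br_tab_closed)
  note carrier = V3_components[OF v] V3_components[OF w] V3_components[OF assms(1)]
    V3_components[OF assms(2)] V3_components[OF assms(3)]
  fix k :: nat assume "k < 3"
  then consider "k = 0" | "k = 1" | "k = 2" by linarith
  then show "rot (br R (tab R a b c) v w) k = br R (tab R (rot b) (rot c) (rot a)) (rot v) (rot w) k"
    by cases (use carrier in \<open>simp_all add: rot_def br_tab assms v w rot_V3, algebra+\<close>)
qed

lemma lie_iso_rot:
  assumes "a \<in> V3 R" "b \<in> V3 R" "c \<in> V3 R"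
  shows "lie_iso R (tab R a b c) (tab R (rot b) (rot c) (rot a))"
proof -
  have "bij_betw rot (V3 R) (V3 R)"
    by (rule bij_betwI[where g="\<lambda>v. rot (rot v)"]) (auto simp: rot_V3 rot_rot_rot)
  then show ?thesis
    unfolding lie_iso_def using assms by (auto intro!: exI[of _ rot] simp: rot_vadd rot_smul rot_br_tab)
qed

end

text \<open>The three disjuncts are the families \<open>L\<^sub>1(\<eta>,\<rho>,\<mu>,\<lambda>)\<close>, \<open>L\<^sub>4(\<eta>,\<mu>,\<lambda>)\<close> and \<open>L\<^sub>*(\<eta>,\<mu>,\<lambda>)\<close>.\<close>

definition iso_to_normal_form :: "('a, 'm) ring_scheme \<Rightarrow> 'a set \<Rightarrow> (nat \<Rightarrow> nat \<Rightarrow> nat \<Rightarrow> 'a) \<Rightarrow> bool" where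
  "iso_to_normal_form R S T \<longleftrightarrow> (\<exists>\<eta>\<in>S. \<exists>\<rho>\<in>S. \<exists>\<mu>\<in>S. \<exists>lam\<in>S.
     (\<eta> \<otimes>\<^bsub>R\<^esub> \<rho> \<ominus>\<^bsub>R\<^esub> \<mu> \<otimes>\<^bsub>R\<^esub> lam = \<zero>\<^bsub>R\<^esub> \<and>
      lie_iso R T (tab R (vec3 \<zero>\<^bsub>R\<^esub> \<eta> \<zero>\<^bsub>R\<^esub>) (vec3 \<zero>\<^bsub>R\<^esub> \<mu> \<zero>\<^bsub>R\<^esub>) (vec3 \<rho> \<zero>\<^bsub>R\<^esub> lam)))
     \<or> (\<eta> \<otimes>\<^bsub>R\<^esub> \<mu> \<otimes>\<^bsub>R\<^esub> lam \<noteq> \<zero>\<^bsub>R\<^esub> \<and>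
        lie_iso R T (tab R (vec3 \<eta> \<mu> \<zero>\<^bsub>R\<^esub>) (vec3 \<zero>\<^bsub>R\<^esub> lam (\<ominus>\<^bsub>R\<^esub> \<eta>))
                             (vec3 (\<ominus>\<^bsub>R\<^esub> lam) \<zero>\<^bsub>R\<^esub> (\<ominus>\<^bsub>R\<^esub> \<mu>))))
     \<or> (\<eta> \<otimes>\<^bsub>R\<^esub> \<mu> \<otimes>\<^bsub>R\<^esub> lam \<noteq> \<zero>\<^bsub>R\<^esub> \<and>
        lie_iso R T (tab R (vec3 \<eta> \<mu> \<zero>\<^bsub>R\<^esub>) (vec3 \<zero>\<^bsub>R\<^esub> lam \<eta>) (vec3 lam \<zero>\<^bsub>R\<^esub> \<mu>))))"

lemma iso_to_normal_form_lie_iso: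
  "lie_iso R T T' \<Longrightarrow> iso_to_normal_form R S T' \<Longrightarrow> iso_to_normal_form R S T"
  unfolding iso_to_normal_form_def by (meson lie_iso_trans)

context cring begin

lemma iso_to_normal_form_L1:
  assumes "\<alpha>2 \<in> S" "\<beta>2 \<in> S" "\<gamma>1 \<in> S" "\<gamma>3 \<in> S" "S \<subseteq> carrier R"
    and "\<beta>2 \<otimes> \<gamma>3 = \<gamma>1 \<otimes> \<alpha>2"
  shows "iso_to_normal_form R S (tab R (vec3 \<zero> \<alpha>2 \<zero>) (vec3 \<zero> \<beta>2 \<zero>) (vec3 \<gamma>1 \<zero> \<gamma>3))"
proof -
  have "\<alpha>2 \<otimes> \<gamma>1 \<ominus> \<beta>2 \<otimes> \<gamma>3 = \<alpha>2 \<otimes> \<gamma>1 \<ominus> \<gamma>1 \<otimes> \<alpha>2"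
    using assms(6) by simp
  also have "\<dots> = \<zero>"
    using assms(1,3,5) by (simp add: subset_iff) algebra
  finally have "\<alpha>2 \<otimes> \<gamma>1 \<ominus> \<beta>2 \<otimes> \<gamma>3 = \<zero>" .
  with assms show ?thesis
    unfolding iso_to_normal_form_def by (blast intro: lie_iso_refl)
qed

lemma iso_to_normal_form_rot:
  assumes "a \<in> V3 R" "b \<in> V3 R" "c \<in> V3 R"
    and "iso_to_normal_form R S (tab R (rot b) (rot c) (rot a))"
  shows "iso_to_normal_form R S (tab R a b c)"
  using iso_to_normal_form_lie_iso[OF lie_iso_rot] assms by blast

end

context "domain" begin

lemma jacobi_nondegenerate:
  assumes carr: "\<alpha>1 \<in> carrier R" "\<alpha>2 \<in> carrier R" "\<beta>2 \<in> carrier R"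
      "\<beta>3 \<in> carrier R" "\<gamma>1 \<in> carrier R" "\<gamma>3 \<in> carrier R"
    and J: "\<alpha>1 \<otimes> \<beta>2 = \<beta>3 \<otimes> \<gamma>1" "\<beta>2 \<otimes> \<gamma>3 = \<gamma>1 \<otimes> \<alpha>2" "\<alpha>1 \<otimes> \<gamma>3 = \<alpha>2 \<otimes> \<beta>3"
    and nd: "\<not> (\<alpha>1 = \<zero> \<and> \<beta>3 = \<zero>)" "\<not> (\<beta>2 = \<zero> \<and> \<gamma>1 = \<zero>)" "\<not> (\<alpha>2 = \<zero> \<and> \<gamma>3 = \<zero>)"
  shows "\<beta>2 \<noteq> \<zero>" "\<gamma>3 \<noteq> \<zero>"
proof -
  show "\<beta>2 \<noteq> \<zero>"
  proof
    assume "\<beta>2 = \<zero>"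
    with J carr nd(2) have "\<beta>3 = \<zero>" "\<alpha>2 = \<zero>"
      by (metis integral_iff l_null r_null)+
    with J carr nd(1,3) show False
      by (metis integral_iff r_null)
  qed
  show "\<gamma>3 \<noteq> \<zero>"
  proof
    assume "\<gamma>3 = \<zero>"
    with J carr nd(3) have "\<beta>3 = \<zero>" "\<gamma>1 = \<zero>"
      by (metis integral_iff r_null)+
    with J carr nd(1,2) show False
      by (metis integral_iff r_null)
  qed
qed

lemma jacobi_beta3_eq_pm_alpha1:
  assumes carr: "\<alpha>1 \<in> carrier R" "\<alpha>2 \<in> carrier R" "\<beta>2 \<in> carrier R"
      "\<beta>3 \<in> carrier R" "\<gamma>1 \<in> carrier R" "\<gamma>3 \<in> carrier R"
    and J: "\<alpha>1 \<otimes> \<beta>2 = \<beta>3 \<otimes> \<gamma>1" "\<beta>2 \<otimes> \<gamma>3 = \<gamma>1 \<otimes> \<alpha>2" "\<alpha>1 \<otimes> \<gamma>3 = \<alpha>2 \<otimes> \<beta>3"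
    and nd: "\<not> (\<alpha>1 = \<zero> \<and> \<beta>3 = \<zero>)" "\<not> (\<beta>2 = \<zero> \<and> \<gamma>1 = \<zero>)" "\<not> (\<alpha>2 = \<zero> \<and> \<gamma>3 = \<zero>)"
  shows "\<beta>3 = \<alpha>1 \<or> \<beta>3 = \<ominus> \<alpha>1"
proof -
  have "(\<alpha>1 \<ominus> \<beta>3) \<otimes> (\<alpha>1 \<oplus> \<beta>3) \<otimes> (\<beta>2 \<otimes> \<gamma>3)
      = (\<alpha>1 \<otimes> \<beta>2) \<otimes> (\<alpha>1 \<otimes> \<gamma>3) \<ominus> (\<beta>3 \<otimes> \<beta>3) \<otimes> (\<beta>2 \<otimes> \<gamma>3)"
    using carr by algebra
  also have "\<dots> = (\<beta>3 \<otimes> \<gamma>1) \<otimes> (\<alpha>2 \<otimes> \<beta>3) \<ominus> (\<beta>3 \<otimes> \<beta>3) \<otimes> (\<gamma>1 \<otimes> \<alpha>2)"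
    by (simp only: J)
  also have "\<dots> = \<zero>"
    using carr by algebra
  finally have "((\<alpha>1 \<ominus> \<beta>3) \<otimes> (\<alpha>1 \<oplus> \<beta>3)) \<otimes> (\<beta>2 \<otimes> \<gamma>3) = \<zero>" .
  moreover have "\<beta>2 \<otimes> \<gamma>3 \<noteq> \<zero>"
    using carr jacobi_nondegenerate[OF carr J nd] integral by blast
  ultimately have "\<alpha>1 \<ominus> \<beta>3 = \<zero> \<or> \<alpha>1 \<oplus> \<beta>3 = \<zero>"
    using carr integral by blast
  moreover have "\<beta>3 = \<alpha>1 \<ominus> (\<alpha>1 \<ominus> \<beta>3)" "\<alpha>1 \<ominus> \<zero> = \<alpha>1" "\<beta>3 \<oplus> \<alpha>1 = \<alpha>1 \<oplus> \<beta>3"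
    using carr by algebra+
  ultimately show ?thesis
    using carr sum_zero_eq_neg by metis
qed

lemma jacobi_signs:
  assumes carr: "\<alpha>1 \<in> carrier R" "\<alpha>2 \<in> carrier R" "\<beta>2 \<in> carrier R"
      "\<beta>3 \<in> carrier R" "\<gamma>1 \<in> carrier R" "\<gamma>3 \<in> carrier R"
    and J: "\<alpha>1 \<otimes> \<beta>2 = \<beta>3 \<otimes> \<gamma>1" "\<beta>2 \<otimes> \<gamma>3 = \<gamma>1 \<otimes> \<alpha>2" "\<alpha>1 \<otimes> \<gamma>3 = \<alpha>2 \<otimes> \<beta>3"
    and nd: "\<not> (\<alpha>1 = \<zero> \<and> \<beta>3 = \<zero>)" "\<not> (\<beta>2 = \<zero> \<and> \<gamma>1 = \<zero>)" "\<not> (\<alpha>2 = \<zero> \<and> \<gamma>3 = \<zero>)"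
  shows "\<alpha>1 \<otimes> \<alpha>2 \<otimes> \<beta>2 \<noteq> \<zero>"
    and "(\<beta>3 = \<alpha>1 \<and> \<gamma>1 = \<beta>2 \<and> \<gamma>3 = \<alpha>2) \<or> (\<beta>3 = \<ominus> \<alpha>1 \<and> \<gamma>1 = \<ominus> \<beta>2 \<and> \<gamma>3 = \<ominus> \<alpha>2)"
proof -
  note nonzero = jacobi_nondegenerate[OF carr J nd]
  from jacobi_beta3_eq_pm_alpha1[OF carr J nd]
  show signs: "(\<beta>3 = \<alpha>1 \<and> \<gamma>1 = \<beta>2 \<and> \<gamma>3 = \<alpha>2) \<or> (\<beta>3 = \<ominus> \<alpha>1 \<and> \<gamma>1 = \<ominus> \<beta>2 \<and> \<gamma>3 = \<ominus> \<alpha>2)"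
  proof
    assume plus: "\<beta>3 = \<alpha>1"
    with nd(1) have "\<alpha>1 \<noteq> \<zero>" by blast
    moreover from plus J carr have "\<alpha>1 \<otimes> \<gamma>1 = \<alpha>1 \<otimes> \<beta>2" "\<alpha>1 \<otimes> \<gamma>3 = \<alpha>1 \<otimes> \<alpha>2"
      by (simp_all add: m_comm)
    ultimately show ?thesis
      using plus carr m_lcancel by blast
  next
    assume minus: "\<beta>3 = \<ominus> \<alpha>1"
    with nd(1) carr have "\<alpha>1 \<noteq> \<zero>" by auto
    moreover from minus J carr have "\<alpha>1 \<otimes> \<gamma>1 = \<alpha>1 \<otimes> \<ominus> \<beta>2" "\<alpha>1 \<otimes> \<gamma>3 = \<alpha>1 \<otimes> \<ominus> \<alpha>2"
      by (simp_all add: m_comm r_minus l_minus)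
    ultimately show ?thesis
      using minus carr m_lcancel by (meson a_inv_closed)
  qed
  have "\<alpha>1 \<noteq> \<zero>" "\<alpha>2 \<noteq> \<zero>"
    using signs nd(1) nonzero(2) carr by auto
  with nonzero(1) carr show "\<alpha>1 \<otimes> \<alpha>2 \<otimes> \<beta>2 \<noteq> \<zero>"
    by (simp add: integral_iff)
qed

lemma iso_to_normal_form_of_jacobi:
  assumes S: "S \<subseteq> carrier R" "\<alpha>1 \<in> S" "\<alpha>2 \<in> S" "\<beta>2 \<in> S" "\<beta>3 \<in> S" "\<gamma>1 \<in> S" "\<gamma>3 \<in> S"
    and J: "\<alpha>1 \<otimes> \<beta>2 = \<beta>3 \<otimes> \<gamma>1" "\<beta>2 \<otimes> \<gamma>3 = \<gamma>1 \<otimes> \<alpha>2" "\<alpha>1 \<otimes> \<gamma>3 = \<alpha>2 \<otimes> \<beta>3"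
  shows "iso_to_normal_form R S (tab R (vec3 \<alpha>1 \<alpha>2 \<zero>) (vec3 \<zero> \<beta>2 \<beta>3) (vec3 \<gamma>1 \<zero> \<gamma>3))"
proof -
  have carr: "\<alpha>1 \<in> carrier R" "\<alpha>2 \<in> carrier R" "\<beta>2 \<in> carrier R"
      "\<beta>3 \<in> carrier R" "\<gamma>1 \<in> carrier R" "\<gamma>3 \<in> carrier R"
    using S by auto
  consider "\<alpha>1 = \<zero> \<and> \<beta>3 = \<zero>" | "\<beta>2 = \<zero> \<and> \<gamma>1 = \<zero>" | "\<alpha>2 = \<zero> \<and> \<gamma>3 = \<zero>"
    | (nondegenerate) "\<not> (\<alpha>1 = \<zero> \<and> \<beta>3 = \<zero>)" "\<not> (\<beta>2 = \<zero> \<and> \<gamma>1 = \<zero>)" "\<not> (\<alpha>2 = \<zero> \<and> \<gamma>3 = \<zero>)"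
    by blast
  then show ?thesis
  proof cases
    case 1
    then show ?thesis using iso_to_normal_form_L1[OF S(3,4,6,7,1) J(2)] by simp
  next
    case 2
    from J(3) carr have "\<gamma>3 \<otimes> \<alpha>1 = \<alpha>2 \<otimes> \<beta>3" by (simp add: m_comm)
    from iso_to_normal_form_L1[OF S(5,7,3,2,1) this] 2
    have "iso_to_normal_form R S (tab R (rot (vec3 \<zero> \<beta>2 \<beta>3)) (rot (vec3 \<gamma>1 \<zero> \<gamma>3)) (rot (vec3 \<alpha>1 \<alpha>2 \<zero>)))"
      by simp
    then show ?thesis
      by (rule iso_to_normal_form_rot[rotated 3]) (simp_all add: carr)
  next
    case 3
    from iso_to_normal_form_L1[OF S(6,2,5,4,1) J(1)] 3
    have "iso_to_normal_form R S (tab R (rot (rot (vec3 \<gamma>1 \<zero> \<gamma>3))) (rot (rot (vec3 \<alpha>1 \<alpha>2 \<zero>)))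
        (rot (rot (vec3 \<zero> \<beta>2 \<beta>3))))"
      by simp
    then have "iso_to_normal_form R S (tab R (rot (vec3 \<zero> \<beta>2 \<beta>3)) (rot (vec3 \<gamma>1 \<zero> \<gamma>3))
        (rot (vec3 \<alpha>1 \<alpha>2 \<zero>)))"
      by (rule iso_to_normal_form_rot[rotated 3]) (simp_all add: carr)
    then show ?thesis
      by (rule iso_to_normal_form_rot[rotated 3]) (simp_all add: carr)
  next
    case nondegenerate
    note signs = jacobi_signs[OF carr J nondegenerate]
    from signs(2) have "lie_iso R (tab R (vec3 \<alpha>1 \<alpha>2 \<zero>) (vec3 \<zero> \<beta>2 \<beta>3) (vec3 \<gamma>1 \<zero> \<gamma>3))
        (tab R (vec3 \<alpha>1 \<alpha>2 \<zero>) (vec3 \<zero> \<beta>2 (\<ominus> \<alpha>1)) (vec3 (\<ominus> \<beta>2) \<zero> (\<ominus> \<alpha>2)))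
      \<or> lie_iso R (tab R (vec3 \<alpha>1 \<alpha>2 \<zero>) (vec3 \<zero> \<beta>2 \<beta>3) (vec3 \<gamma>1 \<zero> \<gamma>3))
        (tab R (vec3 \<alpha>1 \<alpha>2 \<zero>) (vec3 \<zero> \<beta>2 \<alpha>1) (vec3 \<beta>2 \<zero> \<alpha>2))"
      using lie_iso_refl by auto
    with signs(1) S(2-4) show ?thesis
      unfolding iso_to_normal_form_def by blast
  qed
qed

end

lemma Zp_simps:
  "carrier (Zp p) = {a. \<forall>n. a n \<in> {0..<int p ^ n} \<and> a (Suc n) mod int p ^ n = a n}"
  "x \<otimes>\<^bsub>Zp p\<^esub> y = (\<lambda>n. (x n * y n) mod int p ^ n)"
  "x \<oplus>\<^bsub>Zp p\<^esub> y = (\<lambda>n. (x n + y n) mod int p ^ n)"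
  "\<one>\<^bsub>Zp p\<^esub> = (\<lambda>n. 1 mod int p ^ n)"
  "\<zero>\<^bsub>Zp p\<^esub> = (\<lambda>n. 0)"
  by (simp_all add: Zp_def)

lemma Zp_mod_power:
  assumes "x \<in> carrier (Zp p)" "k \<le> n"
  shows "x n mod int p ^ k = x k"
  using assms(2)
proof (induction n rule: dec_induct)
  case base
  then show ?case using assms(1) by (auto simp: Zp_simps)
next
  case (step n)
  have "x (Suc n) mod int p ^ k = (x (Suc n) mod int p ^ n) mod int p ^ k"
    using step(1) by (simp add: mod_mod_cancel le_imp_power_dvd)
  also have "\<dots> = x n mod int p ^ k" using assms(1) by (auto simp: Zp_simps)
  finally show ?case using step by simp
qed

lemma Zp_memI:
  assumes "p > 0" "\<And>n. X (Suc n) mod int p ^ n = X n mod int p ^ n"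
  shows "(\<lambda>n. X n mod int p ^ n) \<in> carrier (Zp p)"
proof -
  have "(X (Suc n) mod int p ^ Suc n) mod int p ^ n = X n mod int p ^ n" for n
    using assms(2) by (simp add: mod_mod_cancel le_imp_power_dvd)
  then show ?thesis using assms(1) by (auto simp: Zp_simps)
qed

lemma Zp_coherent: "x \<in> carrier (Zp p) \<Longrightarrow> x (Suc n) mod int p ^ n = x n mod int p ^ n"
  by (simp add: Zp_simps)

lemma Zp_add_closed:
  "p > 0 \<Longrightarrow> x \<in> carrier (Zp p) \<Longrightarrow> y \<in> carrier (Zp p) \<Longrightarrow> x \<oplus>\<^bsub>Zp p\<^esub> y \<in> carrier (Zp p)"
  unfolding Zp_simps(3) by (rule Zp_memI) (simp_all add: mod_add_cong[OF Zp_coherent Zp_coherent])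

lemma Zp_mult_closed:
  "p > 0 \<Longrightarrow> x \<in> carrier (Zp p) \<Longrightarrow> y \<in> carrier (Zp p) \<Longrightarrow> x \<otimes>\<^bsub>Zp p\<^esub> y \<in> carrier (Zp p)"
  unfolding Zp_simps(2) by (rule Zp_memI) (simp_all add: mod_mult_cong[OF Zp_coherent Zp_coherent])

lemma Zp_cring:
  assumes "p > 0"
  shows "cring (Zp p)"
proof (rule cringI)
  note mod_self = Zp_mod_power[OF _ order_refl]
  show "abelian_group (Zp p)"
  proof (rule abelian_groupI)
    fix x assume x: "x \<in> carrier (Zp p)"
    show "\<zero>\<^bsub>Zp p\<^esub> \<oplus>\<^bsub>Zp p\<^esub> x = x"
      using mod_self[OF x] by (simp add: Zp_simps)
    have "(\<lambda>n. (- x n) mod int p ^ n) \<in> carrier (Zp p)"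
      by (rule Zp_memI[OF assms]) (rule mod_minus_cong[OF Zp_coherent[OF x]])
    moreover have "(\<lambda>n. (- x n) mod int p ^ n) \<oplus>\<^bsub>Zp p\<^esub> x = \<zero>\<^bsub>Zp p\<^esub>"
      by (simp add: Zp_simps mod_simps)
    ultimately show "\<exists>y\<in>carrier (Zp p). y \<oplus>\<^bsub>Zp p\<^esub> x = \<zero>\<^bsub>Zp p\<^esub>" by blast
  next
    fix x y z
    show "x \<oplus>\<^bsub>Zp p\<^esub> y \<oplus>\<^bsub>Zp p\<^esub> z = x \<oplus>\<^bsub>Zp p\<^esub> (y \<oplus>\<^bsub>Zp p\<^esub> z)"
      by (simp add: Zp_simps mod_simps add.assoc)
    show "x \<oplus>\<^bsub>Zp p\<^esub> y = y \<oplus>\<^bsub>Zp p\<^esub> x"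
      by (simp add: Zp_simps add.commute)
  qed (use assms Zp_add_closed in \<open>auto simp: Zp_simps\<close>)
  show "comm_monoid (Zp p)"
  proof (rule comm_monoidI)
    fix x assume x: "x \<in> carrier (Zp p)"
    show "\<one>\<^bsub>Zp p\<^esub> \<otimes>\<^bsub>Zp p\<^esub> x = x"
      using mod_self[OF x] by (simp add: Zp_simps mod_simps)
  next
    fix x y z
    show "x \<otimes>\<^bsub>Zp p\<^esub> y \<otimes>\<^bsub>Zp p\<^esub> z = x \<otimes>\<^bsub>Zp p\<^esub> (y \<otimes>\<^bsub>Zp p\<^esub> z)"
      by (simp add: Zp_simps mod_simps mult.assoc)
    show "x \<otimes>\<^bsub>Zp p\<^esub> y = y \<otimes>\<^bsub>Zp p\<^esub> x"
      by (simp add: Zp_simps mult.commute)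
  next
    show "\<one>\<^bsub>Zp p\<^esub> \<in> carrier (Zp p)"
      unfolding Zp_simps(4) by (rule Zp_memI[OF assms]) simp
  qed (use assms Zp_mult_closed in auto)
qed (auto simp: Zp_simps mod_simps distrib_right)

lemma Zp_not_dvd:
  assumes "x \<in> carrier (Zp p)" "x k \<noteq> 0" "k \<le> n"
  shows "\<not> int p ^ k dvd x n"
  using Zp_mod_power[OF assms(1,3)] assms(2) by (simp add: dvd_eq_mod_eq_0)

lemma Zp_integral:
  assumes "prime p" "x \<in> carrier (Zp p)" "y \<in> carrier (Zp p)" "x \<otimes>\<^bsub>Zp p\<^esub> y = \<zero>\<^bsub>Zp p\<^esub>"
  shows "x = \<zero>\<^bsub>Zp p\<^esub> \<or> y = \<zero>\<^bsub>Zp p\<^esub>"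
proof (rule ccontr)
  assume "\<not> ?thesis"
  then obtain i j where i: "x i \<noteq> 0" and j: "y j \<noteq> 0"
    by (auto simp: Zp_simps fun_eq_iff)
  let ?N = "i + j"
  have x: "\<not> int p ^ i dvd x ?N" and y: "\<not> int p ^ j dvd y ?N"
    using Zp_not_dvd[OF assms(2) i] Zp_not_dvd[OF assms(3) j] by simp_all
  then have nonzero: "x ?N \<noteq> 0" "y ?N \<noteq> 0" by auto
  have not_unit: "\<not> is_unit (int p)"
    using assms(1) by (simp add: prime_int_iff prime_nat_iff)
  have "multiplicity (int p) (x ?N * y ?N) = multiplicity (int p) (x ?N) + multiplicity (int p) (y ?N)"
    using assms(1) nonzero by (simp add: prime_elem_multiplicity_mult_distrib prime_imp_prime_elem)
  also have "\<dots> < ?N"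
    using x y nonzero not_unit by (simp add: power_dvd_iff_le_multiplicity add_strict_mono)
  finally have "\<not> int p ^ ?N dvd x ?N * y ?N"
    using nonzero not_unit by (simp add: power_dvd_iff_le_multiplicity)
  moreover have "(x ?N * y ?N) mod int p ^ ?N = 0"
    using assms(4) by (simp add: Zp_simps fun_eq_iff)
  ultimately show False by (simp add: dvd_eq_mod_eq_0)
qed

lemma Zp_domain:
  assumes "prime p"
  shows "domain (Zp p)"
proof -
  have p: "p > 1" using prime_gt_1_nat[OF assms] .
  then have "\<one>\<^bsub>Zp p\<^esub> 1 \<noteq> \<zero>\<^bsub>Zp p\<^esub> 1" by (simp add: Zp_simps)
  then show ?thesis
    using Zp_cring p Zp_integral[OF assms]
    by (intro domain.intro domain_axioms.intro) auto
qed

theorem mainTheorem19: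
  fixes p :: nat and \<alpha>1 \<alpha>2 \<beta>2 \<beta>3 \<gamma>1 \<gamma>3 :: "nat \<Rightarrow> int"
  assumes "prime p" and "odd p"
    and "\<alpha>1 \<in> pZp p" and "\<alpha>2 \<in> pZp p" and "\<beta>2 \<in> pZp p" and "\<beta>3 \<in> pZp p"
    and "\<gamma>1 \<in> pZp p" and "\<gamma>3 \<in> pZp p"
    and "is_lie (Zp p) (tab (Zp p) (vec3 \<alpha>1 \<alpha>2 \<zero>\<^bsub>Zp p\<^esub>) (vec3 \<zero>\<^bsub>Zp p\<^esub> \<beta>2 \<beta>3)
                                    (vec3 \<gamma>1 \<zero>\<^bsub>Zp p\<^esub> \<gamma>3))"
  shows "\<exists>\<eta>\<in>pZp p. \<exists>\<rho>\<in>pZp p. \<exists>\<mu>\<in>pZp p. \<exists>lam\<in>pZp p.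
    (let R = Zp p; LA = tab R (vec3 \<alpha>1 \<alpha>2 \<zero>\<^bsub>R\<^esub>) (vec3 \<zero>\<^bsub>R\<^esub> \<beta>2 \<beta>3) (vec3 \<gamma>1 \<zero>\<^bsub>R\<^esub> \<gamma>3) in
     ((\<eta> \<otimes>\<^bsub>R\<^esub> \<rho> \<ominus>\<^bsub>R\<^esub> \<mu> \<otimes>\<^bsub>R\<^esub> lam = \<zero>\<^bsub>R\<^esub> \<and>
      lie_iso R LA (tab R (vec3 \<zero>\<^bsub>R\<^esub> \<eta> \<zero>\<^bsub>R\<^esub>) (vec3 \<zero>\<^bsub>R\<^esub> \<mu> \<zero>\<^bsub>R\<^esub>) (vec3 \<rho> \<zero>\<^bsub>R\<^esub> lam)))
     \<or> lie_iso R LA (tab R (vzero R) (vec3 \<zero>\<^bsub>R\<^esub> \<eta> \<mu>) (vzero R))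
     \<or> lie_iso R LA (tab R (vzero R) (vec3 \<zero>\<^bsub>R\<^esub> \<zero>\<^bsub>R\<^esub> \<eta>) (vec3 \<zero>\<^bsub>R\<^esub> \<zero>\<^bsub>R\<^esub> \<mu>))
     \<or> (\<eta> \<otimes>\<^bsub>R\<^esub> \<mu> \<otimes>\<^bsub>R\<^esub> lam \<noteq> \<zero>\<^bsub>R\<^esub> \<and>
        lie_iso R LA (tab R (vec3 \<eta> \<mu> \<zero>\<^bsub>R\<^esub>) (vec3 \<zero>\<^bsub>R\<^esub> lam (\<ominus>\<^bsub>R\<^esub> \<eta>))
                              (vec3 (\<ominus>\<^bsub>R\<^esub> lam) \<zero>\<^bsub>R\<^esub> (\<ominus>\<^bsub>R\<^esub> \<mu>))))
     \<or> (\<eta> \<otimes>\<^bsub>R\<^esub> \<mu> \<otimes>\<^bsub>R\<^esub> lam \<noteq> \<zero>\<^bsub>R\<^esub> \<and>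
        lie_iso R LA (tab R (vec3 \<eta> \<mu> \<zero>\<^bsub>R\<^esub>) (vec3 \<zero>\<^bsub>R\<^esub> lam \<eta>) (vec3 lam \<zero>\<^bsub>R\<^esub> \<mu>)))))"
proof -
  interpret Zp: "domain" "Zp p" by (rule Zp_domain[OF \<open>prime p\<close>])
  have S: "pZp p \<subseteq> carrier (Zp p)" by (auto simp: pZp_def)
  with assms(3-8) have "\<alpha>1 \<in> carrier (Zp p)" "\<alpha>2 \<in> carrier (Zp p)" "\<beta>2 \<in> carrier (Zp p)"
    "\<beta>3 \<in> carrier (Zp p)" "\<gamma>1 \<in> carrier (Zp p)" "\<gamma>3 \<in> carrier (Zp p)"
    by auto
  note J = Zp.jacobi_relations[OF assms(9) this]
  have "iso_to_normal_form (Zp p) (pZp p)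
      (tab (Zp p) (vec3 \<alpha>1 \<alpha>2 \<zero>\<^bsub>Zp p\<^esub>) (vec3 \<zero>\<^bsub>Zp p\<^esub> \<beta>2 \<beta>3) (vec3 \<gamma>1 \<zero>\<^bsub>Zp p\<^esub> \<gamma>3))"
    by (rule Zp.iso_to_normal_form_of_jacobi[OF S assms(3-8) J])
  then show ?thesis
    unfolding iso_to_normal_form_def Let_def by blast
qed

end
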